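(* Let $A$ be a symmetric binary $n\times n$ adjacency matrix and let $d$ be the shortest-path distance of the graph $A$. Let $W=(w_{ij})\in\mathbb R^{n\times n}$ satisfy (i) $\tau:=\sup_i\sum_j|w_{ij}|<1$, and (ii) $A_{ij}=0$ implies $w_{ij}=0$ for all $1\le i,j\le n$. Let $(U_i)_{i\ge1}$ be independent, centered random variables with $\sup_i\|U_i\|_4$ bounded by a constant, and let the noise vector $\epsilon$ follow the network autoregressive (NAR) model $$\epsilon_i=\sum_j w_{ij}\epsilon_j+U_i,\quad 1\le i\le n,$$ i.e. $\epsilon=(I-W)^{-1}U$. Then $\epsilon$ satisfies Assumption 2 (correlation decay, stated in the context) with respect to $d$ with $\rho=\tau^{1/2}$ (and a constant $c$ not depending on $n$).
   Context: For index sets $U,V\subset\{1,\dots,n\}$, $d(U,V)=\min_{i\in U,j\in V}d(i,j)$ and $d(i,U)=d(\{i\},U)$; for $U\subset\{1,\dots,n\}$, $S_U=\sum_{i\in U}\epsilon_i$. Assumption 2 (correlation decay): there are constants $\rho\in(0,1)$ and $c>0$ (independent of $n$) such that (a) $|\mathbb E(\epsilon_i\epsilon_j^\ell)|\le c\rho^{d(i,j)}$ for $\ell\in\{1,2\}$ and all $i,j$; (b) $|\mathrm{Cov}(\epsilon_i\epsilon_j,\epsilon_k\epsilon_l)|\le c\rho^{d(\{i,j\},\{k,l\})}$ for all $i,j,k,l$; (c) for every bounded function $h:\mathbb R\to\mathbb R$ with bounded derivative, every constant $t$, every index $i$ and every index set $U$, $|\mathrm{Cov}(\epsilon_i,h(tS_U))|\le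 c(1+|t||U|)\rho^{d(i,U)}$ (the constant $c$ here may depend on $\|h\|_\infty$ and $\|h'\|_\infty$). *)

theory Defs
  imports "HOL-Probability.Probability" "HOL-Library.Extended_Nat"
begin

definition is_walk :: "(nat \<Rightarrow> nat \<Rightarrow> bool) \<Rightarrow> nat \<Rightarrow> (nat \<Rightarrow> nat) \<Rightarrow> nat \<Rightarrow> nat \<Rightarrow> nat \<Rightarrow> bool" where
  "is_walk A n p k i j \<longleftrightarrow> p 0 = i \<and> p k = j \<and> (\<forall>m\<le>k. p m < n) \<and> (\<forall>m<k. A (p m) (p (Suc m)))"

text \<open>Shortest-path distance (infinite if no path exists).\<close>
definition gdist :: "(nat \<Rightarrow> nat \<Rightarrow> bool) \<Rightarrow> nat \<Rightarrow> nat \<Rightarrow> nat \<Rightarrow> enat" where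
  "gdist A n i j = Inf {enat k | k. \<exists>p. is_walk A n p k i j}"

text \<open>Distance between index sets: minimum over pairs (infinite if a set is empty).\<close>
definition setdist :: "(nat \<Rightarrow> nat \<Rightarrow> enat) \<Rightarrow> nat set \<Rightarrow> nat set \<Rightarrow> enat" where
  "setdist d U V = Inf {d i j | i j. i \<in> U \<and> j \<in> V}"

text \<open>rho to the power of an extended natural; rho^\<infinity> = 0 (the limit for rho < 1).\<close>
definition epow :: "real \<Rightarrow> enat \<Rightarrow> real" where
  "epow \<rho> e = (case e of enat k \<Rightarrow> \<rho> ^ k | \<infinity> \<Rightarrow> 0)"

definition cov :: "'a measure \<Rightarrow> ('a \<Rightarrow> real) \<Rightarrow> ('a \<Rightarrow> real) \<Rightarrow> real" where
  "cov M X Y = prob_space.expectation M (\<lambda>x. X x * Y x)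
               - prob_space.expectation M X * prob_space.expectation M Y"

text \<open>Assumption 2 (correlation decay) for eps_0..eps_{n-1} w.r.t. distance d, with constants
  rho and c; in part (c) the constant c is allowed to depend on the bounds Bh, Bh' for
  the sup norms of h and h'.\<close>
definition assumption2 ::
  "'a measure \<Rightarrow> nat \<Rightarrow> (nat \<Rightarrow> nat \<Rightarrow> enat) \<Rightarrow> (nat \<Rightarrow> 'a \<Rightarrow> real) \<Rightarrow> real \<Rightarrow> real \<Rightarrow> real \<Rightarrow> real \<Rightarrow> bool" where
  "assumption2 M n d \<epsilon> \<rho> c Bh Bh' \<longleftrightarrow>
     (\<forall>i<n. \<forall>j<n. \<forall>l\<in>{1::nat,2}.
        \<bar>prob_space.expectation M (\<lambda>x. \<epsilon> i x * \<epsilon> j x ^ l)\<bar> \<le> c * epow \<rho> (d i j)) \<and>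
     (\<forall>i<n. \<forall>j<n. \<forall>k<n. \<forall>l<n.
        \<bar>cov M (\<lambda>x. \<epsilon> i x * \<epsilon> j x) (\<lambda>x. \<epsilon> k x * \<epsilon> l x)\<bar>
          \<le> c * epow \<rho> (setdist d {i, j} {k, l})) \<and>
     (\<forall>(h::real \<Rightarrow> real) h' t i V.
        (\<forall>x. \<bar>h x\<bar> \<le> Bh) \<longrightarrow> (\<forall>x. (h has_real_derivative h' x) (at x)) \<longrightarrow>
        (\<forall>x. \<bar>h' x\<bar> \<le> Bh') \<longrightarrow> i < n \<longrightarrow> V \<subseteq> {..<n} \<longrightarrow>
        \<bar>cov M (\<epsilon> i) (\<lambda>x. h (t * (\<Sum>k\<in>V. \<epsilon> k x)))\<bar>
          \<le> c * (1 + \<bar>t\<bar> * real (card V)) * epow \<rho> (setdist d {i} V))"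

end

theory Submission
  imports Defs
begin

lemma gdist_le_walk: "is_walk A n p k i j \<Longrightarrow> gdist A n i j \<le> enat k"
  unfolding gdist_def by (rule Inf_lower) blast

lemma gdist_enatE:
  assumes "gdist A n i j = enat k"
  obtains p where "is_walk A n p k i j"
proof -
  let ?S = "{enat k | k. \<exists>p. is_walk A n p k i j}"
  have "?S \<noteq> {}"
  proof
    assume "?S = {}"
    with assms show False
      by (simp add: gdist_def top_enat_def)
  qed
  then obtain x where "x \<in> ?S"
    by blast
  then have "(LEAST x. x \<in> ?S) \<in> ?S"
    by (rule LeastI)
  with \<open>?S \<noteq> {}\<close> have "gdist A n i j \<in> ?S"
    by (simp add: gdist_def Inf_enat_def)
  then obtain k' p where "enat k = enat k'" "is_walk A n p k' i j"
    using assms by auto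
  with that show thesis
    by simp
qed

lemma is_walk_reverse:
  assumes walk: "is_walk A n p k i j" and sym: "\<And>u v. u < n \<Longrightarrow> v < n \<Longrightarrow> A u v = A v u"
  shows "is_walk A n (\<lambda>m. p (k - m)) k j i"
  unfolding is_walk_def
proof (intro conjI allI impI)
  fix m assume "m < k"
  then have "k - Suc m < k" "Suc (k - Suc m) = k - m"
    by simp_all
  then have "A (p (k - Suc m)) (p (k - m))" and "p (k - Suc m) < n" "p (k - m) < n"
    using walk unfolding is_walk_def by (metis, simp_all)
  then show "A (p (k - m)) (p (k - Suc m))"
    using sym[of "p (k - Suc m)" "p (k - m)"] by simp
qed (use walk in \<open>auto simp: is_walk_def\<close>)

lemma gdist_commute:
  assumes "\<And>u v. u < n \<Longrightarrow> v < n \<Longrightarrow> A u v = A v u"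
  shows "gdist A n i j = gdist A n j i"
proof -
  have le: "gdist A n j i \<le> gdist A n i j" for i j
  proof (cases "gdist A n i j")
    case (enat k)
    then obtain p where "is_walk A n p k i j"
      by (rule gdist_enatE)
    then have "gdist A n j i \<le> enat k"
      by (rule gdist_le_walk[OF is_walk_reverse[OF _ assms]])
    with enat show ?thesis
      by simp
  qed simp
  show ?thesis
    using le[of i j] le[of j i] by simp
qed

lemma is_walk_append:
  assumes p: "is_walk A n p a i k" and q: "is_walk A n q b k j"
  shows "is_walk A n (\<lambda>m. if m \<le> a then p m else q (m - a)) (a + b) i j"
  unfolding is_walk_def
proof (intro conjI allI impI)
  have pq: "p a = q 0"
    using p q by (auto simp: is_walk_def)
  fix m assume m: "m < a + b"
  consider "Suc m \<le> a" | "m = a" | "a < m"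
    by linarith
  then show "A (if m \<le> a then p m else q (m - a)) (if Suc m \<le> a then p (Suc m) else q (Suc m - a))"
  proof cases
    case 2
    then show ?thesis
      using p q pq m by (auto simp: is_walk_def)
  next
    case 3
    have "m - a < b"
      using m 3 by simp
    with q have "A (q (m - a)) (q (Suc (m - a)))"
      by (simp add: is_walk_def)
    with 3 show ?thesis
      by (simp add: Suc_diff_le)
  qed (use p in \<open>auto simp: is_walk_def\<close>)
qed (use p q in \<open>auto simp: is_walk_def\<close>)

lemma gdist_triangle: "gdist A n i j \<le> gdist A n i k + gdist A n k j"
proof (cases "gdist A n i k"; cases "gdist A n k j")
  fix a b assume ik: "gdist A n i k = enat a" and kj: "gdist A n k j = enat b"
  obtain p q where "is_walk A n p a i k" "is_walk A n q b k j"
    using gdist_enatE[OF ik] gdist_enatE[OF kj] by metis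
  then have "gdist A n i j \<le> enat (a + b)"
    by (rule gdist_le_walk[OF is_walk_append])
  with ik kj show ?thesis
    by simp
qed simp_all

lemma gdist_far_from_one_end:
  assumes sym: "\<And>u v. u < n \<Longrightarrow> v < n \<Longrightarrow> A u v = A v u"
    and far: "enat (2 * m) \<le> gdist A n i j + 1"
  shows "enat m \<le> gdist A n i a \<or> enat m \<le> gdist A n j a"
proof (rule ccontr)
  assume "\<not> ?thesis"
  then obtain x y where x: "gdist A n i a = enat x" "x < m" and y: "gdist A n j a = enat y" "y < m"
    by (cases "gdist A n i a"; cases "gdist A n j a") auto
  have "gdist A n a j = gdist A n j a"
    by (rule gdist_commute[OF sym])
  then have "gdist A n i j \<le> enat (x + y)"
    using gdist_triangle[of A n i j a] x y by simp
  then have "gdist A n i j + 1 \<le> enat (x + y) + 1"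
    by (rule add_right_mono)
  with far have "enat (2 * m) \<le> enat (x + y) + 1"
    by (rule order_trans)
  then have "2 * m \<le> x + y + 1"
    by (simp add: one_enat_def)
  with x y show False
    by linarith
qed

lemma epow_nonneg: "0 \<le> \<rho> \<Longrightarrow> 0 \<le> epow \<rho> e"
  by (cases e) (auto simp: epow_def)

lemma epow_le_one: "0 \<le> \<rho> \<Longrightarrow> \<rho> \<le> 1 \<Longrightarrow> epow \<rho> e \<le> 1"
  by (cases e) (auto simp: epow_def power_le_one)

lemma epow_antimono: "0 \<le> \<rho> \<Longrightarrow> \<rho> \<le> 1 \<Longrightarrow> e \<le> e' \<Longrightarrow> epow \<rho> e' \<le> epow \<rho> e"
  by (cases e; cases e') (auto simp: epow_def intro!: power_decreasing)

lemma setdist_le: "i \<in> S \<Longrightarrow> j \<in> T \<Longrightarrow> setdist D S T \<le> D i j"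
  unfolding setdist_def by (rule Inf_lower) blast

fun mat_pow :: "nat \<Rightarrow> (nat \<Rightarrow> nat \<Rightarrow> real) \<Rightarrow> nat \<Rightarrow> nat \<Rightarrow> nat \<Rightarrow> real" where
  "mat_pow n W 0 i j = (if i = j then 1 else 0)"
| "mat_pow n W (Suc m) i j = (\<Sum>k<n. W i k * mat_pow n W m k j)"

definition neumann :: "nat \<Rightarrow> (nat \<Rightarrow> nat \<Rightarrow> real) \<Rightarrow> nat \<Rightarrow> nat \<Rightarrow> real" where
  "neumann n W i j = (\<Sum>m. mat_pow n W m i j)"

locale nar_weights =
  fixes n :: nat and A :: "nat \<Rightarrow> nat \<Rightarrow> bool" and W :: "nat \<Rightarrow> nat \<Rightarrow> real" and \<tau> :: real
  assumes tau_nonneg: "0 \<le> \<tau>" and tau_less_1: "\<tau> < 1"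
    and row_sum_le: "\<And>i. i < n \<Longrightarrow> (\<Sum>j<n. \<bar>W i j\<bar>) \<le> \<tau>"
    and W_off_graph: "\<And>i j. i < n \<Longrightarrow> j < n \<Longrightarrow> \<not> A i j \<Longrightarrow> W i j = 0"
    and A_sym: "\<And>i j. i < n \<Longrightarrow> j < n \<Longrightarrow> A i j = A j i"
begin

abbreviation "P \<equiv> mat_pow n W"
abbreviation "B \<equiv> neumann n W"
abbreviation "d \<equiv> gdist A n"

lemma mat_pow_row_sum_le: "i < n \<Longrightarrow> (\<Sum>j<n. \<bar>P m i j\<bar>) \<le> \<tau> ^ m"
proof (induction m arbitrary: i)
  case 0
  then show ?case
    by (simp add: if_distrib cong: if_cong)
next
  case (Suc m)
  have "(\<Sum>j<n. \<bar>P (Suc m) i j\<bar>) \<le> (\<Sum>j<n. \<Sum>k<n. \<bar>W i k\<bar> * \<bar>P m k j\<bar>)"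
    by (auto intro!: sum_mono sum_abs[THEN order_trans] simp: abs_mult)
  also have "\<dots> = (\<Sum>k<n. \<bar>W i k\<bar> * (\<Sum>j<n. \<bar>P m k j\<bar>))"
    by (subst sum.swap) (simp add: sum_distrib_left)
  also have "\<dots> \<le> (\<Sum>k<n. \<bar>W i k\<bar> * \<tau> ^ m)"
    using Suc.IH by (intro sum_mono mult_left_mono) auto
  also have "\<dots> \<le> \<tau> * \<tau> ^ m"
    using row_sum_le[OF Suc.prems] tau_nonneg by (simp add: sum_distrib_right[symmetric] mult_right_mono)
  finally show ?case
    by simp
qed

lemma mat_pow_entry_le: "i < n \<Longrightarrow> j < n \<Longrightarrow> \<bar>P m i j\<bar> \<le> \<tau> ^ m"
  using mat_pow_row_sum_le[of i m] member_le_sum[of j "{..<n}" "\<lambda>j. \<bar>P m i j\<bar>"] by fastforce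

lemma gdist_le_if_mat_pow_nonzero: "i < n \<Longrightarrow> j < n \<Longrightarrow> P m i j \<noteq> 0 \<Longrightarrow> d i j \<le> enat m"
proof (induction m arbitrary: i)
  case 0
  then have "is_walk A n (\<lambda>_. i) 0 i j"
    by (auto simp: is_walk_def split: if_splits)
  then show ?case
    by (rule gdist_le_walk)
next
  case (Suc m)
  then obtain k where k: "k < n" "W i k \<noteq> 0" "P m k j \<noteq> 0"
    by (auto elim: sum.not_neutral_contains_not_neutral)
  with Suc.prems have "is_walk A n (\<lambda>l. if l = 0 then i else k) 1 i k"
    using W_off_graph by (auto simp: is_walk_def)
  then have "d i k \<le> enat 1"
    by (rule gdist_le_walk)
  moreover have "d k j \<le> enat m"
    using Suc k by blast
  ultimately have "d i k + d k j \<le> enat (Suc m)"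
    using add_mono by fastforce
  then show ?case
    using gdist_triangle[of A n i j k] by (rule order_trans[rotated])
qed

lemma mat_pow_eq_0_if_far:
  assumes "i < n" "j < n" "enat m \<le> d i j" "p < m"
  shows "P p i j = 0"
proof (rule ccontr)
  assume "P p i j \<noteq> 0"
  with assms(1,2) have "d i j \<le> enat p"
    by (rule gdist_le_if_mat_pow_nonzero)
  with assms(3) have "enat m \<le> enat p"
    by (rule order_trans)
  with assms(4) show False
    by simp
qed

lemma summable_abs_mat_pow: "i < n \<Longrightarrow> j < n \<Longrightarrow> summable (\<lambda>m. \<bar>P m i j\<bar>)"
  using mat_pow_entry_le tau_nonneg tau_less_1
  by (intro summable_rabs_comparison_test[of _ "\<lambda>m. \<tau> ^ m"]) (auto intro!: summable_geometric)

lemma neumann_tail_sum_le: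
  assumes i: "i < n"
  shows "(\<Sum>j | j < n \<and> enat m \<le> d i j. \<bar>B i j\<bar>) \<le> \<tau> ^ m / (1 - \<tau>)"
proof -
  let ?J = "{j. j < n \<and> enat m \<le> d i j}"
  define g where "g p = (if p < m then 0 else \<tau> ^ p)" for p
  have g_sums: "g sums (\<tau> ^ m / (1 - \<tau>))"
  proof -
    have "(\<lambda>p. \<tau> ^ m * \<tau> ^ p) sums (\<tau> ^ m * (1 / (1 - \<tau>)))"
      using tau_nonneg tau_less_1 by (intro sums_mult geometric_sums) auto
    then have "(\<lambda>p. g (p + m)) sums (\<tau> ^ m / (1 - \<tau>))"
      by (simp add: g_def power_add mult.commute)
    moreover have "(\<Sum>p<m. g p) = 0"
      by (simp add: g_def)
    ultimately show ?thesis
      by (simp add: sums_iff_shift)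
  qed
  have summable: "summable (\<lambda>p. \<bar>P p i j\<bar>)" if "j \<in> ?J" for j
    using summable_abs_mat_pow i that by simp
  have "(\<Sum>j\<in>?J. \<bar>B i j\<bar>) \<le> (\<Sum>j\<in>?J. \<Sum>p. \<bar>P p i j\<bar>)"
    unfolding neumann_def using summable by (intro sum_mono summable_rabs)
  also have "\<dots> = (\<Sum>p. \<Sum>j\<in>?J. \<bar>P p i j\<bar>)"
    using summable by (intro suminf_sum[symmetric])
  also have "\<dots> \<le> (\<Sum>p. g p)"
  proof (rule suminf_le)
    fix p
    show "(\<Sum>j\<in>?J. \<bar>P p i j\<bar>) \<le> g p"
    proof (cases "p < m")
      case True
      then have "(\<Sum>j\<in>?J. \<bar>P p i j\<bar>) = 0"
        using mat_pow_eq_0_if_far[OF i] by (intro sum.neutral) auto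
      with True show ?thesis
        by (simp add: g_def)
    next
      case False
      have "(\<Sum>j\<in>?J. \<bar>P p i j\<bar>) \<le> (\<Sum>j<n. \<bar>P p i j\<bar>)"
        by (intro sum_mono2) auto
      with False mat_pow_row_sum_le[OF i, of p] show ?thesis
        by (simp add: g_def)
    qed
  qed (use summable g_sums in \<open>auto simp: sums_iff intro: summable_sum\<close>)
  also have "\<dots> = \<tau> ^ m / (1 - \<tau>)"
    using g_sums by (simp add: sums_iff)
  finally show ?thesis .
qed

lemma neumann_entry_le:
  assumes "i < n" "j < n"
  shows "\<bar>B i j\<bar> \<le> 1 / (1 - \<tau>)"
proof -
  have "\<bar>B i j\<bar> \<le> (\<Sum>j | j < n \<and> enat 0 \<le> d i j. \<bar>B i j\<bar>)"
    using assms by (intro member_le_sum) (auto simp: zero_enat_def[symmetric])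
  also have "\<dots> \<le> 1 / (1 - \<tau>)"
    using neumann_tail_sum_le[OF assms(1), of 0] by simp
  finally show ?thesis .
qed

definition overlap :: "nat \<Rightarrow> nat \<Rightarrow> real" where
  "overlap i j = (\<Sum>a<n. \<bar>B i a\<bar> * \<bar>B j a\<bar>)"

lemma overlap_nonneg: "0 \<le> overlap i j"
  unfolding overlap_def by (intro sum_nonneg) simp

lemma overlap_le_of_separated:
  assumes i: "i < n" and j: "j < n"
    and separated: "\<And>a. a < n \<Longrightarrow> enat m \<le> d i a \<or> enat m \<le> d j a"
  shows "overlap i j \<le> 2 * \<tau> ^ m / (1 - \<tau>) ^ 2"
proof -
  let ?far = "\<lambda>k. {a. a < n \<and> enat m \<le> d k a}"
  have far_part: "(\<Sum>a\<in>?far k. \<bar>B k a\<bar> * \<bar>B l a\<bar>) \<le> \<tau> ^ m / (1 - \<tau>) ^ 2"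
    if k: "k < n" and l: "l < n" for k l
  proof -
    have "(\<Sum>a\<in>?far k. \<bar>B k a\<bar> * \<bar>B l a\<bar>) \<le> (\<Sum>a\<in>?far k. \<bar>B k a\<bar> * (1 / (1 - \<tau>)))"
      using neumann_entry_le[OF l] by (intro sum_mono mult_left_mono) auto
    also have "\<dots> = (\<Sum>a\<in>?far k. \<bar>B k a\<bar>) * (1 / (1 - \<tau>))"
      by (simp add: sum_divide_distrib)
    also have "\<dots> \<le> \<tau> ^ m / (1 - \<tau>) * (1 / (1 - \<tau>))"
      using neumann_tail_sum_le[OF k, of m] tau_less_1 by (intro mult_right_mono) auto
    finally show ?thesis
      by (simp add: power2_eq_square)
  qed
  have "overlap i j \<le> (\<Sum>a\<in>?far i \<union> ?far j. \<bar>B i a\<bar> * \<bar>B j a\<bar>)"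
    unfolding overlap_def using separated by (intro sum_mono2) auto
  also have "\<dots> \<le> (\<Sum>a\<in>?far i. \<bar>B i a\<bar> * \<bar>B j a\<bar>) + (\<Sum>a\<in>?far j. \<bar>B j a\<bar> * \<bar>B i a\<bar>)"
    by (simp add: sum_Un sum_nonneg mult.commute)
  also have "\<dots> \<le> 2 * \<tau> ^ m / (1 - \<tau>) ^ 2"
    using far_part[OF i j] far_part[OF j i] by simp
  finally show ?thesis .
qed

lemma overlap_le:
  assumes i: "i < n" and j: "j < n"
  shows "overlap i j \<le> 2 / (1 - \<tau>) ^ 2 * epow (sqrt \<tau>) (d i j)"
proof (cases "d i j")
  case (enat D)
  define m where "m = (D + 1) div 2"
  have "overlap i j \<le> 2 * \<tau> ^ m / (1 - \<tau>) ^ 2"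
  proof (rule overlap_le_of_separated[OF i j])
    have "enat (2 * m) \<le> d i j + 1"
      using enat by (simp add: m_def one_enat_def)
    then show "enat m \<le> d i a \<or> enat m \<le> d j a" for a
      by (intro gdist_far_from_one_end[OF A_sym])
  qed
  also have "\<tau> ^ m = sqrt \<tau> ^ (2 * m)"
    using tau_nonneg by (simp add: power_mult)
  also have "\<dots> \<le> sqrt \<tau> ^ D"
    using tau_nonneg tau_less_1 by (intro power_decreasing) (auto simp: m_def)
  finally show ?thesis
    using enat by (simp add: epow_def divide_right_mono)
next
  case infinity
  have "overlap i j \<le> 2 * \<tau> ^ m / (1 - \<tau>) ^ 2" for m
  proof (rule overlap_le_of_separated[OF i j])
    have "enat (2 * m) \<le> d i j + 1"
      using infinity by simp
    then show "enat m \<le> d i a \<or> enat m \<le> d j a" for a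
      by (intro gdist_far_from_one_end[OF A_sym])
  qed
  moreover have "(\<lambda>m. 2 * \<tau> ^ m / (1 - \<tau>) ^ 2) \<longlonglongrightarrow> 0"
    using tau_nonneg tau_less_1
    by (intro tendsto_divide_zero tendsto_mult_right_zero LIMSEQ_power_zero) auto
  ultimately have "overlap i j \<le> 0"
    by (intro LIMSEQ_le_const) auto
  with infinity show ?thesis
    by (simp add: epow_def)
qed

lemma sqrt_tau_bounds: "0 \<le> sqrt \<tau>" "sqrt \<tau> \<le> 1"
  using tau_nonneg tau_less_1 by simp_all

lemma overlap_le_setdist:
  assumes "i \<in> S" "k \<in> T" "i < n" "k < n"
  shows "overlap i k \<le> 2 / (1 - \<tau>) ^ 2 * epow (sqrt \<tau>) (setdist d S T)"
proof -
  have "epow (sqrt \<tau>) (d i k) \<le> epow (sqrt \<tau>) (setdist d S T)"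
    using assms tau_nonneg tau_less_1 by (intro epow_antimono setdist_le) simp_all
  then have "2 / (1 - \<tau>) ^ 2 * epow (sqrt \<tau>) (d i k) \<le> 2 / (1 - \<tau>) ^ 2 * epow (sqrt \<tau>) (setdist d S T)"
    by (rule mult_left_mono) simp
  with overlap_le[OF assms(3,4)] show ?thesis
    by (rule order_trans)
qed

lemma overlap_le_const:
  assumes "i < n" "k < n"
  shows "overlap i k \<le> 2 / (1 - \<tau>) ^ 2"
proof -
  have "epow (sqrt \<tau>) (d i k) \<le> 1"
    using tau_nonneg tau_less_1 by (intro epow_le_one) simp_all
  then have "2 / (1 - \<tau>) ^ 2 * epow (sqrt \<tau>) (d i k) \<le> 2 / (1 - \<tau>) ^ 2"
    by (intro mult_left_le) simp_all
  with overlap_le[OF assms] show ?thesis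
    by (rule order_trans)
qed

lemma fixed_point_expansion:
  assumes eq: "\<And>i. i < n \<Longrightarrow> e i = (\<Sum>j<n. W i j * e j) + u i" and i: "i < n"
  shows "e i = (\<Sum>j<n. P m i j * e j) + (\<Sum>j<n. (\<Sum>p<m. P p i j) * u j)"
  using i
proof (induction m arbitrary: i)
  case 0
  have "(if i = j then 1 else 0) * e j = (if i = j then e j else 0)" for j
    by simp
  with 0 show ?case
    by simp
next
  case (Suc m)
  have e_part: "(\<Sum>k<n. W i k * (\<Sum>j<n. P m k j * e j)) = (\<Sum>j<n. P (Suc m) i j * e j)"
    by (simp add: sum_distrib_left sum_distrib_right mult.assoc) (rule sum.swap)
  have u_part: "(\<Sum>k<n. W i k * (\<Sum>j<n. (\<Sum>p<m. P p k j) * u j))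
      = (\<Sum>j<n. (\<Sum>p<m. P (Suc p) i j) * u j)"
  proof -
    have "(\<Sum>k<n. W i k * (\<Sum>j<n. (\<Sum>p<m. P p k j) * u j))
        = (\<Sum>k<n. \<Sum>j<n. \<Sum>p<m. W i k * P p k j * u j)"
      by (simp add: sum_distrib_left sum_distrib_right mult.assoc)
    also have "\<dots> = (\<Sum>j<n. \<Sum>p<m. \<Sum>k<n. W i k * P p k j * u j)"
      by (subst sum.swap) (simp add: sum.swap[of _ "{..<n}" "{..<m}"])
    also have "\<dots> = (\<Sum>j<n. (\<Sum>p<m. P (Suc p) i j) * u j)"
      by (simp add: sum_distrib_left sum_distrib_right mult.assoc)
    finally show ?thesis .
  qed
  have u_shift: "(\<Sum>j<n. (\<Sum>p<Suc m. P p i j) * u j) = u i + (\<Sum>j<n. (\<Sum>p<m. P (Suc p) i j) * u j)"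
  proof -
    have "(\<Sum>p<Suc m. P p i j) * u j = (if i = j then u j else 0) + (\<Sum>p<m. P (Suc p) i j) * u j"
      for j
      by (simp only: sum.lessThan_Suc_shift) (simp add: distrib_right)
    with Suc.prems show ?thesis
      by (simp add: sum.distrib)
  qed
  have "e i = (\<Sum>k<n. W i k * e k) + u i"
    using eq Suc.prems by blast
  also have "\<dots> = (\<Sum>k<n. W i k * ((\<Sum>j<n. P m k j * e j) + (\<Sum>j<n. (\<Sum>p<m. P p k j) * u j))) + u i"
    using Suc.IH by (intro arg_cong[where f="\<lambda>x. x + u i"] sum.cong) auto
  also have "\<dots> = (\<Sum>j<n. P (Suc m) i j * e j) + (\<Sum>j<n. (\<Sum>p<Suc m. P p i j) * u j)"
    by (simp only: distrib_left sum.distrib e_part u_part u_shift add_ac)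
  finally show ?case .
qed

lemma fixed_point_eq_neumann:
  assumes eq: "\<And>i. i < n \<Longrightarrow> e i = (\<Sum>j<n. W i j * e j) + u i" and i: "i < n"
  shows "e i = (\<Sum>j<n. B i j * u j)"
proof -
  have remainder: "(\<lambda>m. \<Sum>j<n. P m i j * e j) \<longlonglongrightarrow> 0"
  proof (rule Lim_null_comparison)
    have "norm (\<Sum>j<n. P m i j * e j) \<le> (\<Sum>j<n. \<tau> ^ m * \<bar>e j\<bar>)" for m
      unfolding real_norm_def using mat_pow_entry_le[OF i]
      by (intro order_trans[OF sum_abs] sum_mono) (simp add: abs_mult mult_right_mono)
    then show "\<forall>\<^sub>F m in sequentially. norm (\<Sum>j<n. P m i j * e j) \<le> \<tau> ^ m * (\<Sum>j<n. \<bar>e j\<bar>)"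
      by (simp add: sum_distrib_left)
    show "(\<lambda>m. \<tau> ^ m * (\<Sum>j<n. \<bar>e j\<bar>)) \<longlonglongrightarrow> 0"
      using tau_nonneg tau_less_1 by (intro tendsto_mult_left_zero LIMSEQ_power_zero) auto
  qed
  have partial_sums: "(\<lambda>m. \<Sum>j<n. (\<Sum>p<m. P p i j) * u j) \<longlonglongrightarrow> (\<Sum>j<n. B i j * u j)"
  proof (intro tendsto_sum tendsto_mult_right)
    fix j assume "j \<in> {..<n}"
    with i have "summable (\<lambda>p. P p i j)"
      by (intro summable_rabs_cancel[OF summable_abs_mat_pow]) auto
    then show "(\<lambda>m. \<Sum>p<m. P p i j) \<longlonglongrightarrow> B i j"
      unfolding neumann_def by (rule summable_LIMSEQ)
  qed
  have expansion: "e i = (\<Sum>j<n. P m i j * e j) + (\<Sum>j<n. (\<Sum>p<m. P p i j) * u j)" for m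
    by (rule fixed_point_expansion[OF eq i])
  have "(\<lambda>m. e i) \<longlonglongrightarrow> 0 + (\<Sum>j<n. B i j * u j)"
    using tendsto_add[OF remainder partial_sums] by (simp only: expansion[symmetric])
  then show ?thesis
    by (simp add: LIMSEQ_const_iff)
qed

end

lemma borel_measurable_of_deriv:
  fixes h h' :: "real \<Rightarrow> real"
  assumes "\<And>x. (h has_real_derivative h' x) (at x)"
  shows "h \<in> borel_measurable borel"
  using assms by (intro borel_measurable_continuous_onI continuous_at_imp_continuous_on)
    (auto intro: DERIV_isCont)

lemma abs_mult4_le_sum_fourth_powers:
  fixes a b c d :: real
  shows "\<bar>a * b * c * d\<bar> \<le> (a ^ 4 + b ^ 4 + c ^ 4 + d ^ 4) / 4"
proof -
  have am_gm: "\<bar>x * y\<bar> \<le> (x\<^sup>2 + y\<^sup>2) / 2" for x y :: real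
    using sum_squares_bound[of "\<bar>x\<bar>" "\<bar>y\<bar>"] by (simp add: abs_mult)
  have square_sum: "(x\<^sup>2 + y\<^sup>2)\<^sup>2 \<le> 2 * (x ^ 4 + y ^ 4)" for x y :: real
    using sum_squares_bound[of "x\<^sup>2" "y\<^sup>2"] by (simp add: power2_sum power_mult[symmetric])
  have "\<bar>a * b * c * d\<bar> = \<bar>a * b\<bar> * \<bar>c * d\<bar>"
    by (simp add: abs_mult)
  also have "\<dots> \<le> ((a\<^sup>2 + b\<^sup>2) / 2) * ((c\<^sup>2 + d\<^sup>2) / 2)"
    by (intro mult_mono am_gm) auto
  also have "\<dots> \<le> (((a\<^sup>2 + b\<^sup>2) / 2)\<^sup>2 + ((c\<^sup>2 + d\<^sup>2) / 2)\<^sup>2) / 2"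
    using am_gm[of "(a\<^sup>2 + b\<^sup>2) / 2" "(c\<^sup>2 + d\<^sup>2) / 2"] by simp
  also have "\<dots> \<le> (a ^ 4 + b ^ 4 + c ^ 4 + d ^ 4) / 4"
    using square_sum[of a b] square_sum[of c d] by (simp add: power_divide)
  finally show ?thesis .
qed

lemma (in prob_space)
  fixes f1 f2 f3 f4 :: "'a \<Rightarrow> real"
  assumes "\<And>f. f \<in> {f1, f2, f3, f4} \<Longrightarrow>
    f \<in> borel_measurable M \<and> integrable M (\<lambda>x. f x ^ 4) \<and> expectation (\<lambda>x. f x ^ 4) \<le> C"
  shows integrable_mult4: "integrable M (\<lambda>x. f1 x * f2 x * f3 x * f4 x)"
    and expectation_abs_mult4_le: "expectation (\<lambda>x. \<bar>f1 x * f2 x * f3 x * f4 x\<bar>) \<le> C"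
proof -
  let ?g = "\<lambda>x. (f1 x ^ 4 + f2 x ^ 4 + f3 x ^ 4 + f4 x ^ 4) / 4"
  have g: "integrable M ?g"
    using assms by auto
  have bound: "\<bar>f1 x * f2 x * f3 x * f4 x\<bar> \<le> ?g x" for x
    by (rule abs_mult4_le_sum_fourth_powers)
  have "f \<in> borel_measurable M" if "f \<in> {f1, f2, f3, f4}" for f
    using assms that by blast
  then have "(\<lambda>x. f1 x * f2 x * f3 x * f4 x) \<in> borel_measurable M"
    by simp
  then show integrable: "integrable M (\<lambda>x. f1 x * f2 x * f3 x * f4 x)"
    using bound by (intro Bochner_Integration.integrable_bound[OF g]) (auto intro!: AE_I2)
  have "expectation (\<lambda>x. \<bar>f1 x * f2 x * f3 x * f4 x\<bar>) \<le> expectation ?g"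
    using integrable g bound by (intro integral_mono) auto
  also have "\<dots> \<le> C"
    using assms[of f1] assms[of f2] assms[of f3] assms[of f4] by simp
  finally show "expectation (\<lambda>x. \<bar>f1 x * f2 x * f3 x * f4 x\<bar>) \<le> C" .
qed

locale centered_indep_noise = prob_space M for M :: "'a measure" +
  fixes n :: nat and U :: "nat \<Rightarrow> 'a \<Rightarrow> real" and K :: real
  assumes U_indep: "indep_vars (\<lambda>_. borel) U {..<n}"
    and U_fourth_integrable: "\<And>i. i < n \<Longrightarrow> integrable M (\<lambda>x. U i x ^ 4)"
    and U_centered: "\<And>i. i < n \<Longrightarrow> expectation (U i) = 0"
    and U_L4_norm_le: "\<And>i. i < n \<Longrightarrow> expectation (\<lambda>x. \<bar>U i x\<bar> ^ 4) powr (1/4) \<le> K"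
begin

definition Q :: real where "Q = 1 + K ^ 4"

lemma Q_ge_1: "1 \<le> Q"
  by (simp add: Q_def)

lemma U_measurable[measurable]: "i < n \<Longrightarrow> U i \<in> borel_measurable M"
  using U_indep unfolding indep_vars_def by auto

lemma expectation_U_fourth_le:
  assumes i: "i < n"
  shows "expectation (\<lambda>x. U i x ^ 4) \<le> K ^ 4"
proof -
  define z where "z = expectation (\<lambda>x. U i x ^ 4)"
  have "0 \<le> z"
    unfolding z_def by (intro integral_nonneg_AE) auto
  then have "z = (z powr (1/4)) ^ 4"
    by (simp add: powr_powr flip: powr_realpow')
  also have "\<dots> \<le> K ^ 4"
    using U_L4_norm_le[OF i] by (intro power_mono) (simp_all add: z_def power_even_abs)
  finally show ?thesis
    unfolding z_def .
qed

abbreviation moment_factors :: "('a \<Rightarrow> real) set" where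
  "moment_factors \<equiv> insert (\<lambda>_. 1) (U ` {..<n})"

lemma fourth_moment_le_Q:
  assumes "f \<in> moment_factors"
  shows "f \<in> borel_measurable M \<and> integrable M (\<lambda>x. f x ^ 4) \<and> expectation (\<lambda>x. f x ^ 4) \<le> Q"
  using assms U_fourth_integrable expectation_U_fourth_le
  by (fastforce simp: Q_def prob_space intro: add_increasing)

lemma
  assumes "f1 \<in> moment_factors" "f2 \<in> moment_factors" "f3 \<in> moment_factors" "f4 \<in> moment_factors"
  shows integrable_factors4: "integrable M (\<lambda>x. f1 x * f2 x * f3 x * f4 x)"
    and abs_expectation_factors4_le: "\<bar>expectation (\<lambda>x. f1 x * f2 x * f3 x * f4 x)\<bar> \<le> Q"
proof -
  have "\<And>f. f \<in> {f1, f2, f3, f4} \<Longrightarrow>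
      f \<in> borel_measurable M \<and> integrable M (\<lambda>x. f x ^ 4) \<and> expectation (\<lambda>x. f x ^ 4) \<le> Q"
    using assms fourth_moment_le_Q by blast
  then show "integrable M (\<lambda>x. f1 x * f2 x * f3 x * f4 x)"
    and "\<bar>expectation (\<lambda>x. f1 x * f2 x * f3 x * f4 x)\<bar> \<le> Q"
    by (auto intro: integrable_mult4 order_trans[OF integral_abs_bound expectation_abs_mult4_le])
qed

lemma integrable_U: "a < n \<Longrightarrow> integrable M (U a)"
  using integrable_factors4[of "U a" "\<lambda>_. 1" "\<lambda>_. 1" "\<lambda>_. 1"] by simp

lemma integrable_U2: "a < n \<Longrightarrow> b < n \<Longrightarrow> integrable M (\<lambda>x. U a x * U b x)"
  using integrable_factors4[of "U a" "U b" "\<lambda>_. 1" "\<lambda>_. 1"] by simp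

lemma integrable_U3: "a < n \<Longrightarrow> b < n \<Longrightarrow> c < n \<Longrightarrow> integrable M (\<lambda>x. U a x * U b x * U c x)"
  using integrable_factors4[of "U a" "U b" "U c" "\<lambda>_. 1"] by simp

lemma integrable_U4:
  "a < n \<Longrightarrow> b < n \<Longrightarrow> c < n \<Longrightarrow> e < n \<Longrightarrow> integrable M (\<lambda>x. U a x * U b x * U c x * U e x)"
  using integrable_factors4[of "U a" "U b" "U c" "U e"] by simp

lemma abs_expectation_U2_le: "a < n \<Longrightarrow> b < n \<Longrightarrow> \<bar>expectation (\<lambda>x. U a x * U b x)\<bar> \<le> Q"
  using abs_expectation_factors4_le[of "U a" "U b" "\<lambda>_. 1" "\<lambda>_. 1"] by simp

lemma abs_expectation_U3_le:
  "a < n \<Longrightarrow> b < n \<Longrightarrow> c < n \<Longrightarrow> \<bar>expectation (\<lambda>x. U a x * U b x * U c x)\<bar> \<le> Q"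
  using abs_expectation_factors4_le[of "U a" "U b" "U c" "\<lambda>_. 1"] by simp

lemma abs_expectation_U4_le:
  "a < n \<Longrightarrow> b < n \<Longrightarrow> c < n \<Longrightarrow> e < n \<Longrightarrow> \<bar>expectation (\<lambda>x. U a x * U b x * U c x * U e x)\<bar> \<le> Q"
  using abs_expectation_factors4_le[of "U a" "U b" "U c" "U e"] by simp

lemma expectation_mult_indep_rest:
  fixes f :: "real \<Rightarrow> real" and g :: "(nat \<Rightarrow> real) \<Rightarrow> real"
  assumes a: "a < n" and f[measurable]: "f \<in> borel_measurable borel"
    and g: "g \<in> borel_measurable (PiM ({..<n} - {a}) (\<lambda>_. borel))"
    and "integrable M (\<lambda>x. f (U a x))" and "integrable M (\<lambda>x. g (\<lambda>b\<in>{..<n} - {a}. U b x))"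
  shows "expectation (\<lambda>x. f (U a x) * g (\<lambda>b\<in>{..<n} - {a}. U b x)) =
    expectation (\<lambda>x. f (U a x)) * expectation (\<lambda>x. g (\<lambda>b\<in>{..<n} - {a}. U b x))"
proof -
  let ?L = "{..<n} - {a}"
  have "indep_var (PiM {a} (\<lambda>_. borel)) (\<lambda>x. \<lambda>b\<in>{a}. U b x) (PiM ?L (\<lambda>_. borel)) (\<lambda>x. \<lambda>b\<in>?L. U b x)"
    using a by (intro indep_var_restrict[OF U_indep]) auto
  moreover have "(\<lambda>\<omega>. f (\<omega> a)) \<in> borel_measurable (PiM {a} (\<lambda>_. borel))"
    by measurable
  ultimately have "indep_var borel ((\<lambda>\<omega>. f (\<omega> a)) \<circ> (\<lambda>x. \<lambda>b\<in>{a}. U b x))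
      borel (g \<circ> (\<lambda>x. \<lambda>b\<in>?L. U b x))"
    by (rule indep_var_compose[OF _ _ g])
  then have "indep_var borel (\<lambda>x. f (U a x)) borel (\<lambda>x. g (\<lambda>b\<in>?L. U b x))"
    by (simp add: comp_def)
  then show ?thesis
    using assms(4,5) by (rule indep_var_lebesgue_integral)
qed

lemma expectation_U_mult_rest_eq_0:
  assumes a: "a < n" and g: "g \<in> borel_measurable (PiM ({..<n} - {a}) (\<lambda>_. borel))"
    and "integrable M (\<lambda>x. g (\<lambda>b\<in>{..<n} - {a}. U b x))"
  shows "expectation (\<lambda>x. U a x * g (\<lambda>b\<in>{..<n} - {a}. U b x)) = 0"
  using expectation_mult_indep_rest[OF a _ g, of "\<lambda>y. y"] assms integrable_U U_centered by simp

lemma expectation_U2_eq_0: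
  assumes "a < n" "b < n" "a \<noteq> b"
  shows "expectation (\<lambda>x. U a x * U b x) = 0"
proof -
  have "b \<in> {..<n} - {a}"
    using assms by auto
  then show ?thesis
    using expectation_U_mult_rest_eq_0[OF assms(1), of "\<lambda>\<omega>. \<omega> b"] integrable_U assms by simp
qed

lemma expectation_U3_eq_0:
  assumes "a < n" "b < n" "c < n" "a \<notin> {b, c}"
  shows "expectation (\<lambda>x. U a x * U b x * U c x) = 0"
proof -
  have "b \<in> {..<n} - {a}" "c \<in> {..<n} - {a}"
    using assms by auto
  then show ?thesis
    using expectation_U_mult_rest_eq_0[OF assms(1), of "\<lambda>\<omega>. \<omega> b * \<omega> c"] integrable_U2 assms
    by (simp add: mult.assoc)
qed

lemma expectation_U4_eq_0:
  assumes "a < n" "b < n" "c < n" "e < n" "a \<notin> {b, c, e}"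
  shows "expectation (\<lambda>x. U a x * U b x * U c x * U e x) = 0"
proof -
  have "b \<in> {..<n} - {a}" "c \<in> {..<n} - {a}" "e \<in> {..<n} - {a}"
    using assms by auto
  then show ?thesis
    using expectation_U_mult_rest_eq_0[OF assms(1), of "\<lambda>\<omega>. \<omega> b * \<omega> c * \<omega> e"] integrable_U3 assms
    by (simp add: mult.assoc)
qed

lemma expectation_U2_U2:
  assumes "a < n" "c < n" "a \<noteq> c"
  shows "expectation (\<lambda>x. U a x * U a x * U c x * U c x) =
    expectation (\<lambda>x. U a x * U a x) * expectation (\<lambda>x. U c x * U c x)"
proof -
  have "c \<in> {..<n} - {a}"
    using assms by auto
  then show ?thesis
    using expectation_mult_indep_rest[OF assms(1), of "\<lambda>y. y * y" "\<lambda>\<omega>. \<omega> c * \<omega> c"]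
      integrable_U2 assms by (simp add: mult.assoc)
qed

lemma abs_expectation_U3_le_delta:
  assumes "a < n" "b < n" "c < n"
  shows "\<bar>expectation (\<lambda>x. U a x * U b x * U c x)\<bar> \<le> (if b = a \<and> c = a then Q else 0)"
proof (cases "b = a \<and> c = a")
  case True
  then show ?thesis
    using abs_expectation_U3_le assms by simp
next
  case False
  then consider "a \<notin> {b, c}" | "b \<notin> {a, c}" | "c \<notin> {a, b}"
    by fastforce
  then have "expectation (\<lambda>x. U a x * U b x * U c x) = 0"
  proof cases
    case 1
    then show ?thesis
      using expectation_U3_eq_0 assms by blast
  next
    case 2
    then show ?thesis
      using expectation_U3_eq_0[of b a c] assms by (simp add: mult_ac)
  next
    case 3
    then show ?thesis
      using expectation_U3_eq_0[of c a b] assms by (simp add: mult_ac)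
  qed
  with False show ?thesis
    by auto
qed

definition R :: real where "R = Q + Q\<^sup>2"

lemma R_nonneg: "0 \<le> R"
  using Q_ge_1 by (simp add: R_def)

lemma abs_cov_U2_U2_le_R:
  assumes "a < n" "b < n" "c < n" "e < n"
  shows "\<bar>expectation (\<lambda>x. U a x * U b x * U c x * U e x)
      - expectation (\<lambda>x. U a x * U b x) * expectation (\<lambda>x. U c x * U e x)\<bar> \<le> R"
proof -
  have "\<bar>expectation (\<lambda>x. U a x * U b x)\<bar> * \<bar>expectation (\<lambda>x. U c x * U e x)\<bar> \<le> Q * Q"
    using assms Q_ge_1 by (intro mult_mono abs_expectation_U2_le) auto
  then show ?thesis
    using abs_triangle_ineq4[of "expectation (\<lambda>x. U a x * U b x * U c x * U e x)"
        "expectation (\<lambda>x. U a x * U b x) * expectation (\<lambda>x. U c x * U e x)"]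
      abs_expectation_U4_le[OF assms]
    unfolding R_def power2_eq_square abs_mult by linarith
qed

lemma cov_U2_U2_eq_0:
  assumes "a < n" "b < n" "c < n" "e < n" and unmatched: "\<not> ((c = a \<and> e = b) \<or> (c = b \<and> e = a))"
  shows "expectation (\<lambda>x. U a x * U b x * U c x * U e x)
      - expectation (\<lambda>x. U a x * U b x) * expectation (\<lambda>x. U c x * U e x) = 0"
proof -
  from unmatched consider "a \<notin> {b, c, e}" | "b \<notin> {a, c, e}" | "c \<notin> {a, b, e}" | "e \<notin> {a, b, c}"
    | "a = b" "c = e" "a \<noteq> c"
    by fastforce
  then show ?thesis
  proof cases
    case 1
    then show ?thesis
      using expectation_U4_eq_0[OF assms(1-4)] expectation_U2_eq_0[of a b] assms by simp
  next
    case 2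
    then have "expectation (\<lambda>x. U b x * U a x * U c x * U e x) = 0"
      "expectation (\<lambda>x. U b x * U a x) = 0"
      using assms by (auto intro: expectation_U4_eq_0 expectation_U2_eq_0)
    then show ?thesis
      by (simp add: mult_ac)
  next
    case 3
    then have "expectation (\<lambda>x. U c x * U a x * U b x * U e x) = 0"
      "expectation (\<lambda>x. U c x * U e x) = 0"
      using assms by (auto intro: expectation_U4_eq_0 expectation_U2_eq_0)
    then show ?thesis
      by (simp add: mult_ac)
  next
    case 4
    then have "expectation (\<lambda>x. U e x * U a x * U b x * U c x) = 0"
      "expectation (\<lambda>x. U e x * U c x) = 0"
      using assms by (auto intro: expectation_U4_eq_0 expectation_U2_eq_0)
    then show ?thesis
      by (simp add: mult_ac)
  next
    case 5
    then show ?thesis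
      using expectation_U2_U2 assms by simp
  qed
qed

lemma abs_cov_U2_U2_le:
  assumes "a < n" "b < n" "c < n" "e < n"
  shows "\<bar>expectation (\<lambda>x. U a x * U b x * U c x * U e x)
      - expectation (\<lambda>x. U a x * U b x) * expectation (\<lambda>x. U c x * U e x)\<bar>
    \<le> (if c = a \<and> e = b then R else 0) + (if c = b \<and> e = a then R else 0)"
    (is "_ \<le> ?bound")
proof (cases "(c = a \<and> e = b) \<or> (c = b \<and> e = a)")
  case True
  with R_nonneg have "R \<le> ?bound"
    by (elim disjE conjE) simp_all
  with abs_cov_U2_U2_le_R[OF assms] show ?thesis
    by (rule order_trans)
next
  case False
  have "0 \<le> (if P then R else 0)" for P
    using R_nonneg by simp
  with cov_U2_U2_eq_0[OF assms False] show ?thesis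
    by (simp only: abs_zero) (rule add_nonneg_nonneg)
qed

lemma integrable_U_mult_bounded:
  assumes a: "a < n" and G: "G \<in> borel_measurable M" and bound: "\<And>x. \<bar>G x\<bar> \<le> C"
  shows "integrable M (\<lambda>x. U a x * G x)"
proof (rule Bochner_Integration.integrable_bound[OF integrable_mult_right[OF integrable_U[OF a]]])
  have "0 \<le> C"
    using bound[of undefined] by (rule order_trans[OF abs_ge_zero])
  then show "AE x in M. norm (U a x * G x) \<le> norm (C * U a x)"
    using bound by (intro AE_I2) (simp add: abs_mult mult.commute mult_right_mono)
qed (use a G in simp)

lemma measurable_comp_linear_U:
  assumes "h \<in> borel_measurable borel" and "S \<subseteq> {..<n}"
  shows "(\<lambda>x. h (\<Sum>b\<in>S. coef b * U b x)) \<in> borel_measurable M"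
  using assms(2) by (intro measurable_compose[OF _ assms(1)] borel_measurable_sum borel_measurable_times
      borel_measurable_const U_measurable) auto

lemma expectation_U_mult_comp_rest_eq_0:
  assumes a: "a < n" and h: "h \<in> borel_measurable borel" and bound: "\<And>y. \<bar>h y\<bar> \<le> C"
  shows "expectation (\<lambda>x. U a x * h (\<Sum>b\<in>{..<n} - {a}. coef b * U b x)) = 0"
proof -
  let ?L = "{..<n} - {a}"
  have "(\<lambda>\<omega>. h (\<Sum>b\<in>?L. coef b * \<omega> b)) \<in> borel_measurable (PiM ?L (\<lambda>_. borel))"
    by (intro measurable_compose[OF _ h] borel_measurable_sum borel_measurable_times
        borel_measurable_const measurable_component_singleton) auto
  moreover have "integrable M (\<lambda>x. h (\<Sum>b\<in>?L. coef b * U b x))"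
    using bound measurable_comp_linear_U[OF h, of ?L] by (intro integrable_const_bound[of _ C]) auto
  ultimately show ?thesis
    using expectation_U_mult_rest_eq_0[OF a, of "\<lambda>\<omega>. h (\<Sum>b\<in>?L. coef b * \<omega> b)"] by simp
qed

text \<open>Leave-one-out: replacing the argument of \<open>h\<close> by the sum without the \<open>a\<close>-th term gives a
  factor independent of \<open>U_a\<close>, and the error is controlled by the Lipschitz constant of \<open>h\<close>.\<close>
lemma abs_expectation_U_mult_h_le:
  fixes h h' :: "real \<Rightarrow> real" and coef :: "nat \<Rightarrow> real"
  assumes h_bound: "\<And>x. \<bar>h x\<bar> \<le> Bh" and h_deriv: "\<And>x. (h has_real_derivative h' x) (at x)"
    and h'_bound: "\<And>x. \<bar>h' x\<bar> \<le> Bh'" and a: "a < n"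
  shows "\<bar>expectation (\<lambda>x. U a x * h (\<Sum>b<n. coef b * U b x))\<bar> \<le> Bh' * \<bar>coef a\<bar> * Q"
proof -
  let ?L = "{..<n} - {a}"
  define H where "H x = h (\<Sum>b<n. coef b * U b x)" for x
  define H_a where "H_a x = h (\<Sum>b\<in>?L. coef b * U b x)" for x
  have h_measurable: "h \<in> borel_measurable borel"
    using h_deriv by (rule borel_measurable_of_deriv)
  have lipschitz: "\<bar>h y - h z\<bar> \<le> Bh' * \<bar>y - z\<bar>" for y z
    using field_differentiable_bound[of UNIV h h' Bh' y z] h_deriv h'_bound by simp
  have H: "integrable M (\<lambda>x. U a x * H x)" and H_a: "integrable M (\<lambda>x. U a x * H_a x)"
    unfolding H_def H_a_def using a h_bound measurable_comp_linear_U[OF h_measurable]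
    by (auto intro!: integrable_U_mult_bounded)
  have "expectation (\<lambda>x. U a x * H_a x) = 0"
    unfolding H_a_def using a h_measurable h_bound by (rule expectation_U_mult_comp_rest_eq_0)
  then have "expectation (\<lambda>x. U a x * H x) = expectation (\<lambda>x. U a x * H x - U a x * H_a x)"
    using H H_a by simp
  also have "\<bar>\<dots>\<bar> \<le> expectation (\<lambda>x. Bh' * \<bar>coef a\<bar> * (U a x * U a x))"
  proof (rule order_trans[OF integral_abs_bound integral_mono])
    fix x
    have split: "(\<Sum>b<n. coef b * U b x) = coef a * U a x + (\<Sum>b\<in>?L. coef b * U b x)"
      using a by (subst sum.remove[of "{..<n}" a]) auto
    have "\<bar>H x - H_a x\<bar> \<le> Bh' * \<bar>(\<Sum>b<n. coef b * U b x) - (\<Sum>b\<in>?L. coef b * U b x)\<bar>"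
      unfolding H_def H_a_def by (rule lipschitz)
    also have "\<dots> = Bh' * (\<bar>coef a\<bar> * \<bar>U a x\<bar>)"
      by (simp add: split abs_mult)
    finally have H_diff: "\<bar>H x - H_a x\<bar> \<le> Bh' * (\<bar>coef a\<bar> * \<bar>U a x\<bar>)" .
    have "\<bar>U a x * H x - U a x * H_a x\<bar> = \<bar>U a x\<bar> * \<bar>H x - H_a x\<bar>"
      by (simp add: right_diff_distrib[symmetric] abs_mult)
    also have "\<dots> \<le> \<bar>U a x\<bar> * (Bh' * (\<bar>coef a\<bar> * \<bar>U a x\<bar>))"
      using H_diff by (rule mult_left_mono) simp
    also have "\<dots> = Bh' * \<bar>coef a\<bar> * (\<bar>U a x\<bar> * \<bar>U a x\<bar>)"
      by (simp only: mult_ac)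
    also have "\<bar>U a x\<bar> * \<bar>U a x\<bar> = U a x * U a x"
      by (rule abs_mult_self)
    finally show "\<bar>U a x * H x - U a x * H_a x\<bar> \<le> Bh' * \<bar>coef a\<bar> * (U a x * U a x)" .
  qed (use H H_a integrable_U2[OF a a] in auto)
  also have "\<dots> \<le> Bh' * \<bar>coef a\<bar> * Q"
    using abs_expectation_U2_le[OF a a] h'_bound[of 0] by (simp add: mult_left_mono)
  finally show ?thesis
    by (simp only: H_def)
qed

end

lemma abs_sum_le_sum:
  fixes f g :: "'b \<Rightarrow> 'c::linordered_idom"
  shows "(\<And>a. a \<in> A \<Longrightarrow> \<bar>f a\<bar> \<le> g a) \<Longrightarrow> \<bar>sum f A\<bar> \<le> sum g A"
  by (rule order_trans[OF sum_abs sum_mono])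

lemma sum_sum_delta:
  fixes X :: "'b \<Rightarrow> 'c \<Rightarrow> 'd::comm_monoid_add"
  assumes "finite A" "finite B" "a \<in> A" "b \<in> B"
  shows "(\<Sum>c\<in>A. \<Sum>e\<in>B. if c = a \<and> e = b then X c e else 0) = X a b"
proof -
  have "(\<Sum>e\<in>B. if c = a \<and> e = b then X c e else 0) = (if c = a then X c b else 0)" for c
    using assms by (cases "c = a") simp_all
  then show ?thesis
    using assms by simp
qed

context prob_space
begin

lemma expectation_sum2:
  assumes "\<And>a b. a \<in> A \<Longrightarrow> b \<in> B \<Longrightarrow> integrable M (f a b)"
  shows "expectation (\<lambda>x. \<Sum>a\<in>A. \<Sum>b\<in>B. f a b x) = (\<Sum>a\<in>A. \<Sum>b\<in>B. expectation (f a b))"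
proof -
  have "expectation (\<lambda>x. \<Sum>a\<in>A. \<Sum>b\<in>B. f a b x) = (\<Sum>a\<in>A. expectation (\<lambda>x. \<Sum>b\<in>B. f a b x))"
    using assms by (intro Bochner_Integration.integral_sum) (auto intro!: integrable_sum)
  also have "\<dots> = (\<Sum>a\<in>A. \<Sum>b\<in>B. expectation (f a b))"
    using assms by (intro sum.cong refl Bochner_Integration.integral_sum)
  finally show ?thesis .
qed

lemma expectation_sum3:
  assumes "\<And>a b c. a \<in> A \<Longrightarrow> b \<in> B \<Longrightarrow> c \<in> C \<Longrightarrow> integrable M (f a b c)"
  shows "expectation (\<lambda>x. \<Sum>a\<in>A. \<Sum>b\<in>B. \<Sum>c\<in>C. f a b c x) =
    (\<Sum>a\<in>A. \<Sum>b\<in>B. \<Sum>c\<in>C. expectation (f a b c))"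
proof -
  have "expectation (\<lambda>x. \<Sum>a\<in>A. \<Sum>b\<in>B. \<Sum>c\<in>C. f a b c x) =
      (\<Sum>a\<in>A. expectation (\<lambda>x. \<Sum>b\<in>B. \<Sum>c\<in>C. f a b c x))"
    using assms by (intro Bochner_Integration.integral_sum) (auto intro!: integrable_sum)
  also have "\<dots> = (\<Sum>a\<in>A. \<Sum>b\<in>B. \<Sum>c\<in>C. expectation (f a b c))"
    using assms by (intro sum.cong refl expectation_sum2)
  finally show ?thesis .
qed

lemma expectation_sum4:
  assumes "\<And>a b c e. a \<in> A \<Longrightarrow> b \<in> B \<Longrightarrow> c \<in> C \<Longrightarrow> e \<in> E \<Longrightarrow> integrable M (f a b c e)"
  shows "expectation (\<lambda>x. \<Sum>a\<in>A. \<Sum>b\<in>B. \<Sum>c\<in>C. \<Sum>e\<in>E. f a b c e x) =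
    (\<Sum>a\<in>A. \<Sum>b\<in>B. \<Sum>c\<in>C. \<Sum>e\<in>E. expectation (f a b c e))"
proof -
  have "expectation (\<lambda>x. \<Sum>a\<in>A. \<Sum>b\<in>B. \<Sum>c\<in>C. \<Sum>e\<in>E. f a b c e x) =
      (\<Sum>a\<in>A. expectation (\<lambda>x. \<Sum>b\<in>B. \<Sum>c\<in>C. \<Sum>e\<in>E. f a b c e x))"
    using assms by (intro Bochner_Integration.integral_sum) (auto intro!: integrable_sum)
  also have "\<dots> = (\<Sum>a\<in>A. \<Sum>b\<in>B. \<Sum>c\<in>C. \<Sum>e\<in>E. expectation (f a b c e))"
    using assms by (intro sum.cong refl expectation_sum3)
  finally show ?thesis .
qed

end

text \<open>One summand for each of the four decay bounds below.\<close>
definition nar_const :: "real \<Rightarrow> real \<Rightarrow> real \<Rightarrow> real" where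
  "nar_const K \<tau> Bh' = (let Q = 1 + K ^ 4; G = 2 / (1 - \<tau>) ^ 2
     in Q * G + Q / (1 - \<tau>) * G + 2 * (Q + Q\<^sup>2) * G\<^sup>2 + \<bar>Bh'\<bar> * Q * G)"

locale nar_model = centered_indep_noise M n U K + nar_weights n A W \<tau>
  for M :: "'a measure" and n U K A W \<tau> +
  fixes \<epsilon> :: "nat \<Rightarrow> 'a \<Rightarrow> real"
  assumes eps_eq: "\<And>x i. x \<in> space M \<Longrightarrow> i < n \<Longrightarrow> \<epsilon> i x = (\<Sum>j<n. W i j * \<epsilon> j x) + U i x"
begin

lemma eps_eq_neumann: "x \<in> space M \<Longrightarrow> i < n \<Longrightarrow> \<epsilon> i x = (\<Sum>a<n. B i a * U a x)"
  by (rule fixed_point_eq_neumann[where e = "\<lambda>j. \<epsilon> j x"]) (use eps_eq in auto)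

lemma expectation_eps: "i < n \<Longrightarrow> expectation (\<epsilon> i) = 0"
proof -
  assume i: "i < n"
  have "expectation (\<epsilon> i) = expectation (\<lambda>x. \<Sum>a<n. B i a * U a x)"
    using i eps_eq_neumann by (intro Bochner_Integration.integral_cong) auto
  also have "\<dots> = 0"
    by (simp add: integrable_U U_centered)
  finally show ?thesis .
qed

lemma expectation_eps_eps:
  assumes "i < n" "j < n"
  shows "expectation (\<lambda>x. \<epsilon> i x * \<epsilon> j x) =
    (\<Sum>a<n. \<Sum>b<n. B i a * B j b * expectation (\<lambda>x. U a x * U b x))"
proof -
  have "expectation (\<lambda>x. \<epsilon> i x * \<epsilon> j x) =
      expectation (\<lambda>x. \<Sum>a<n. \<Sum>b<n. B i a * B j b * (U a x * U b x))"
    using assms by (intro Bochner_Integration.integral_cong) (simp_all add: eps_eq_neumann sum_product mult_ac)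
  also have "\<dots> = (\<Sum>a<n. \<Sum>b<n. B i a * B j b * expectation (\<lambda>x. U a x * U b x))"
    by (subst expectation_sum2) (simp_all add: integrable_U2)
  finally show ?thesis .
qed

lemma expectation_eps_eps_sq:
  assumes "i < n" "j < n"
  shows "expectation (\<lambda>x. \<epsilon> i x * \<epsilon> j x ^ 2) =
    (\<Sum>a<n. \<Sum>b<n. \<Sum>c<n. B i a * B j b * B j c * expectation (\<lambda>x. U a x * U b x * U c x))"
proof -
  have "\<epsilon> i x * \<epsilon> j x ^ 2 = (\<Sum>a<n. \<Sum>b<n. \<Sum>c<n. B i a * B j b * B j c * (U a x * U b x * U c x))"
    if x: "x \<in> space M" for x
  proof -
    have "\<epsilon> i x * \<epsilon> j x ^ 2 = (\<Sum>a<n. B i a * U a x) * (\<Sum>b<n. \<Sum>c<n. B j b * U b x * (B j c * U c x))"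
      using assms x by (simp add: eps_eq_neumann power2_eq_square sum_product)
    also have "\<dots> = (\<Sum>a<n. \<Sum>b<n. \<Sum>c<n. B i a * U a x * (B j b * U b x * (B j c * U c x)))"
      by (simp only: sum_distrib_right) (simp only: sum_distrib_left)
    finally show ?thesis
      by (simp add: mult_ac)
  qed
  then have "expectation (\<lambda>x. \<epsilon> i x * \<epsilon> j x ^ 2) =
      expectation (\<lambda>x. \<Sum>a<n. \<Sum>b<n. \<Sum>c<n. B i a * B j b * B j c * (U a x * U b x * U c x))"
    by (intro Bochner_Integration.integral_cong) auto
  also have "\<dots> = (\<Sum>a<n. \<Sum>b<n. \<Sum>c<n. B i a * B j b * B j c * expectation (\<lambda>x. U a x * U b x * U c x))"
    by (subst expectation_sum3) (simp_all add: integrable_U3)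
  finally show ?thesis .
qed

lemma cov_eps2_eps2:
  assumes "i < n" "j < n" "k < n" "l < n"
  shows "cov M (\<lambda>x. \<epsilon> i x * \<epsilon> j x) (\<lambda>x. \<epsilon> k x * \<epsilon> l x) =
    (\<Sum>a<n. \<Sum>b<n. \<Sum>c<n. \<Sum>e<n. B i a * B j b * B k c * B l e *
       (expectation (\<lambda>x. U a x * U b x * U c x * U e x)
        - expectation (\<lambda>x. U a x * U b x) * expectation (\<lambda>x. U c x * U e x)))"
proof -
  let ?prod = "\<lambda>i j x. \<Sum>a<n. \<Sum>b<n. B i a * B j b * (U a x * U b x)"
  have "\<epsilon> i x * \<epsilon> j x = ?prod i j x" if "x \<in> space M" "i < n" "j < n" for x i j
    using that by (simp add: eps_eq_neumann sum_product mult_ac)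
  then have "expectation (\<lambda>x. \<epsilon> i x * \<epsilon> j x * (\<epsilon> k x * \<epsilon> l x)) =
      expectation (\<lambda>x. ?prod i j x * ?prod k l x)"
    using assms by (intro Bochner_Integration.integral_cong) auto
  also have "\<dots> = expectation (\<lambda>x. \<Sum>a<n. \<Sum>b<n. \<Sum>c<n. \<Sum>e<n.
      B i a * B j b * B k c * B l e * (U a x * U b x * U c x * U e x))"
  proof (intro Bochner_Integration.integral_cong refl)
    fix x
    have "?prod i j x * ?prod k l x = (\<Sum>a<n. \<Sum>b<n. \<Sum>c<n. \<Sum>e<n.
        B i a * B j b * (U a x * U b x) * (B k c * B l e * (U c x * U e x)))"
      by (simp only: sum_distrib_right) (simp only: sum_distrib_left)
    then show "?prod i j x * ?prod k l x = (\<Sum>a<n. \<Sum>b<n. \<Sum>c<n. \<Sum>e<n.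
        B i a * B j b * B k c * B l e * (U a x * U b x * U c x * U e x))"
      by (simp add: mult_ac)
  qed
  also have "\<dots> = (\<Sum>a<n. \<Sum>b<n. \<Sum>c<n. \<Sum>e<n.
      B i a * B j b * B k c * B l e * expectation (\<lambda>x. U a x * U b x * U c x * U e x))"
    by (subst expectation_sum4) (simp_all add: integrable_U4)
  finally have fourth: "expectation (\<lambda>x. \<epsilon> i x * \<epsilon> j x * (\<epsilon> k x * \<epsilon> l x)) = \<dots>" .
  have product: "expectation (\<lambda>x. \<epsilon> i x * \<epsilon> j x) * expectation (\<lambda>x. \<epsilon> k x * \<epsilon> l x) =
      (\<Sum>a<n. \<Sum>b<n. \<Sum>c<n. \<Sum>e<n. B i a * B j b * B k c * B l e *
        (expectation (\<lambda>x. U a x * U b x) * expectation (\<lambda>x. U c x * U e x)))"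
    unfolding expectation_eps_eps[OF assms(1,2)] expectation_eps_eps[OF assms(3,4)]
    by (simp only: sum_distrib_right) (simp only: sum_distrib_left mult_ac)
  show ?thesis
    unfolding cov_def fourth product by (simp only: right_diff_distrib sum_subtractf)
qed

lemma abs_expectation_eps_eps_le:
  assumes i: "i < n" and j: "j < n"
  shows "\<bar>expectation (\<lambda>x. \<epsilon> i x * \<epsilon> j x)\<bar> \<le> Q * overlap i j"
proof -
  have "\<bar>expectation (\<lambda>x. \<epsilon> i x * \<epsilon> j x)\<bar>
      \<le> (\<Sum>a<n. \<Sum>b<n. if b = a then \<bar>B i a\<bar> * \<bar>B j a\<bar> * Q else 0)"
    unfolding expectation_eps_eps[OF i j]
  proof (intro abs_sum_le_sum)
    fix a b assume ab: "a \<in> {..<n}" "b \<in> {..<n}"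
    show "\<bar>B i a * B j b * expectation (\<lambda>x. U a x * U b x)\<bar>
        \<le> (if b = a then \<bar>B i a\<bar> * \<bar>B j a\<bar> * Q else 0)"
    proof (cases "b = a")
      case True
      have "\<bar>B i a\<bar> * \<bar>B j a\<bar> * \<bar>expectation (\<lambda>x. U a x * U a x)\<bar> \<le> \<bar>B i a\<bar> * \<bar>B j a\<bar> * Q"
        using abs_expectation_U2_le[of a a] ab by (intro mult_left_mono) simp_all
      with True show ?thesis
        by (simp add: abs_mult)
    next
      case False
      with ab show ?thesis
        using expectation_U2_eq_0[of a b] by simp
    qed
  qed
  also have "\<dots> = (\<Sum>a<n. \<bar>B i a\<bar> * \<bar>B j a\<bar> * Q)"
    by (intro sum.cong refl) simp
  also have "\<dots> = Q * overlap i j"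
    by (simp add: overlap_def sum_distrib_left mult_ac)
  finally show ?thesis .
qed

lemma abs_expectation_eps_eps_sq_le:
  assumes i: "i < n" and j: "j < n"
  shows "\<bar>expectation (\<lambda>x. \<epsilon> i x * \<epsilon> j x ^ 2)\<bar> \<le> Q / (1 - \<tau>) * overlap i j"
proof -
  have "\<bar>expectation (\<lambda>x. \<epsilon> i x * \<epsilon> j x ^ 2)\<bar>
      \<le> (\<Sum>a<n. \<Sum>b<n. \<Sum>c<n. if b = a \<and> c = a then \<bar>B i a\<bar> * \<bar>B j a\<bar> * (Q / (1 - \<tau>)) else 0)"
    unfolding expectation_eps_eps_sq[OF i j]
  proof (intro abs_sum_le_sum)
    fix a b c assume abc: "a \<in> {..<n}" "b \<in> {..<n}" "c \<in> {..<n}"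
    show "\<bar>B i a * B j b * B j c * expectation (\<lambda>x. U a x * U b x * U c x)\<bar>
        \<le> (if b = a \<and> c = a then \<bar>B i a\<bar> * \<bar>B j a\<bar> * (Q / (1 - \<tau>)) else 0)"
    proof (cases "b = a \<and> c = a")
      case True
      have "\<bar>B j a\<bar> * \<bar>expectation (\<lambda>x. U a x * U a x * U a x)\<bar> \<le> 1 / (1 - \<tau>) * Q"
        using abc neumann_entry_le[OF j, of a] abs_expectation_U3_le[of a a a] tau_less_1
        by (intro mult_mono) auto
      then have "\<bar>B i a\<bar> * \<bar>B j a\<bar> * (\<bar>B j a\<bar> * \<bar>expectation (\<lambda>x. U a x * U a x * U a x)\<bar>)
          \<le> \<bar>B i a\<bar> * \<bar>B j a\<bar> * (Q / (1 - \<tau>))"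
        by (intro mult_left_mono) auto
      with True show ?thesis
        by (simp add: abs_mult mult_ac)
    next
      case False
      then have "expectation (\<lambda>x. U a x * U b x * U c x) = 0"
        using abs_expectation_U3_le_delta[of a b c] abc unfolding if_not_P[OF False] by simp
      then show ?thesis
        unfolding if_not_P[OF False] by simp
    qed
  qed
  also have "\<dots> = (\<Sum>a<n. \<bar>B i a\<bar> * \<bar>B j a\<bar> * (Q / (1 - \<tau>)))"
    by (intro sum.cong refl) (simp add: sum_sum_delta)
  also have "\<dots> = Q / (1 - \<tau>) * overlap i j"
    by (simp add: overlap_def sum_distrib_left mult_ac)
  finally show ?thesis .
qed

lemma abs_cov_eps2_eps2_le:
  assumes i: "i < n" and j: "j < n" and k: "k < n" and l: "l < n"
  shows "\<bar>cov M (\<lambda>x. \<epsilon> i x * \<epsilon> j x) (\<lambda>x. \<epsilon> k x * \<epsilon> l x)\<bar>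
    \<le> R * (overlap i k * overlap j l + overlap i l * overlap j k)"
proof -
  let ?C = "\<lambda>a b c e. expectation (\<lambda>x. U a x * U b x * U c x * U e x)
    - expectation (\<lambda>x. U a x * U b x) * expectation (\<lambda>x. U c x * U e x)"
  let ?X = "\<lambda>a b. R * (\<bar>B i a\<bar> * \<bar>B k a\<bar>) * (\<bar>B j b\<bar> * \<bar>B l b\<bar>)"
  let ?Y = "\<lambda>a b. R * (\<bar>B i a\<bar> * \<bar>B l a\<bar>) * (\<bar>B j b\<bar> * \<bar>B k b\<bar>)"
  have "\<bar>cov M (\<lambda>x. \<epsilon> i x * \<epsilon> j x) (\<lambda>x. \<epsilon> k x * \<epsilon> l x)\<bar>
      \<le> (\<Sum>a<n. \<Sum>b<n. \<Sum>c<n. \<Sum>e<n.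
            (if c = a \<and> e = b then ?X a b else 0) + (if c = b \<and> e = a then ?Y a b else 0))"
    unfolding cov_eps2_eps2[OF assms]
  proof (intro abs_sum_le_sum)
    fix a b c e assume "a \<in> {..<n}" "b \<in> {..<n}" "c \<in> {..<n}" "e \<in> {..<n}"
    then have "\<bar>?C a b c e\<bar> \<le> (if c = a \<and> e = b then R else 0) + (if c = b \<and> e = a then R else 0)"
      by (intro abs_cov_U2_U2_le) auto
    then have "\<bar>B i a * B j b * B k c * B l e * ?C a b c e\<bar>
        \<le> \<bar>B i a * B j b * B k c * B l e\<bar> * ((if c = a \<and> e = b then R else 0) + (if c = b \<and> e = a then R else 0))"
      unfolding abs_mult[of _ "?C a b c e"] by (rule mult_left_mono) simp
    also have "\<dots> = (if c = a \<and> e = b then ?X a b else 0) + (if c = b \<and> e = a then ?Y a b else 0)"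
    proof -
      have "\<bar>B i a * B j b * B k c * B l e\<bar> * (if c = a \<and> e = b then R else 0)
          = (if c = a \<and> e = b then ?X a b else 0)"
        by (cases "c = a \<and> e = b") (auto simp: abs_mult mult_ac)
      moreover have "\<bar>B i a * B j b * B k c * B l e\<bar> * (if c = b \<and> e = a then R else 0)
          = (if c = b \<and> e = a then ?Y a b else 0)"
        by (cases "c = b \<and> e = a") (auto simp: abs_mult mult_ac)
      ultimately show ?thesis
        by (simp only: distrib_left)
    qed
    finally show "\<bar>B i a * B j b * B k c * B l e * ?C a b c e\<bar> \<le> \<dots>" .
  qed
  also have "\<dots> = (\<Sum>a<n. \<Sum>b<n. ?X a b + ?Y a b)"
    by (intro sum.cong refl) (simp add: sum.distrib sum_sum_delta)
  also have "\<dots> = R * (overlap i k * overlap j l + overlap i l * overlap j k)"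
  proof -
    have separate: "(\<Sum>a<n. \<Sum>b<n. R * F a * G b) = R * ((\<Sum>a<n. F a) * (\<Sum>b<n. G b))"
      for F G :: "nat \<Rightarrow> real"
      by (simp only: sum_product) (simp add: sum_distrib_left mult.assoc)
    show ?thesis
      unfolding overlap_def by (simp only: sum.distrib separate distrib_left)
  qed
  finally show ?thesis .
qed

lemma scaled_sum_eps_eq:
  assumes x: "x \<in> space M" and V: "V \<subseteq> {..<n}"
  shows "t * (\<Sum>k\<in>V. \<epsilon> k x) = (\<Sum>b<n. t * (\<Sum>k\<in>V. B k b) * U b x)"
proof -
  have "(\<Sum>k\<in>V. \<epsilon> k x) = (\<Sum>k\<in>V. \<Sum>b<n. B k b * U b x)"
    using eps_eq_neumann[OF x] V by (intro sum.cong) auto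
  also have "\<dots> = (\<Sum>b<n. \<Sum>k\<in>V. B k b * U b x)"
    by (rule sum.swap)
  also have "\<dots> = (\<Sum>b<n. (\<Sum>k\<in>V. B k b) * U b x)"
    by (simp only: sum_distrib_right)
  finally show ?thesis
    by (simp only: sum_distrib_left mult.assoc[symmetric])
qed

lemma cov_eps_h_eq:
  fixes h :: "real \<Rightarrow> real" and t :: real
  assumes h: "h \<in> borel_measurable borel" and h_bound: "\<And>x. \<bar>h x\<bar> \<le> Bh"
    and i: "i < n" and V: "V \<subseteq> {..<n}"
  defines "coef b \<equiv> t * (\<Sum>k\<in>V. B k b)"
  shows "cov M (\<epsilon> i) (\<lambda>x. h (t * (\<Sum>k\<in>V. \<epsilon> k x)))
    = (\<Sum>a<n. B i a * expectation (\<lambda>x. U a x * h (\<Sum>b<n. coef b * U b x)))"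
proof -
  have "\<epsilon> i x * h (t * (\<Sum>k\<in>V. \<epsilon> k x)) = (\<Sum>a<n. B i a * (U a x * h (\<Sum>b<n. coef b * U b x)))"
    if x: "x \<in> space M" for x
    unfolding scaled_sum_eps_eq[OF x V] eps_eq_neumann[OF x i] coef_def sum_distrib_right
    by (simp only: mult.assoc)
  then have "expectation (\<lambda>x. \<epsilon> i x * h (t * (\<Sum>k\<in>V. \<epsilon> k x)))
      = expectation (\<lambda>x. \<Sum>a<n. B i a * (U a x * h (\<Sum>b<n. coef b * U b x)))"
    by (rule Bochner_Integration.integral_cong[OF refl])
  also have "\<dots> = (\<Sum>a<n. B i a * expectation (\<lambda>x. U a x * h (\<Sum>b<n. coef b * U b x)))"
    using h_bound measurable_comp_linear_U[OF h]
    by (subst Bochner_Integration.integral_sum) (auto intro!: integrable_U_mult_bounded[where C = Bh])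
  finally show ?thesis
    unfolding cov_def expectation_eps[OF i] by simp
qed

lemma abs_cov_eps_h_le:
  fixes h h' :: "real \<Rightarrow> real"
  assumes h_bound: "\<And>x. \<bar>h x\<bar> \<le> Bh" and h_deriv: "\<And>x. (h has_real_derivative h' x) (at x)"
    and h'_bound: "\<And>x. \<bar>h' x\<bar> \<le> Bh'" and i: "i < n" and V: "V \<subseteq> {..<n}"
  shows "\<bar>cov M (\<epsilon> i) (\<lambda>x. h (t * (\<Sum>k\<in>V. \<epsilon> k x)))\<bar> \<le> Bh' * \<bar>t\<bar> * Q * (\<Sum>k\<in>V. overlap i k)"
proof -
  define coef where "coef b = t * (\<Sum>k\<in>V. B k b)" for b
  let ?H = "\<lambda>x. h (\<Sum>b<n. coef b * U b x)"
  have "\<bar>B i a * expectation (\<lambda>x. U a x * ?H x)\<bar> \<le> Bh' * \<bar>t\<bar> * Q * (\<Sum>k\<in>V. \<bar>B i a\<bar> * \<bar>B k a\<bar>)"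
    if a: "a < n" for a
  proof -
    have "\<bar>coef a\<bar> \<le> \<bar>t\<bar> * (\<Sum>k\<in>V. \<bar>B k a\<bar>)"
      unfolding coef_def abs_mult by (intro mult_left_mono sum_abs) simp
    then have "Bh' * \<bar>coef a\<bar> * Q \<le> Bh' * (\<bar>t\<bar> * (\<Sum>k\<in>V. \<bar>B k a\<bar>)) * Q"
      using h'_bound[of 0] Q_ge_1 by (intro mult_right_mono mult_left_mono) auto
    with abs_expectation_U_mult_h_le[OF h_bound h_deriv h'_bound a, of coef]
    have "\<bar>B i a\<bar> * \<bar>expectation (\<lambda>x. U a x * ?H x)\<bar> \<le> \<bar>B i a\<bar> * (Bh' * (\<bar>t\<bar> * (\<Sum>k\<in>V. \<bar>B k a\<bar>)) * Q)"
      by (intro mult_left_mono) auto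
    then show ?thesis
      by (simp add: abs_mult sum_distrib_left mult_ac)
  qed
  then have "\<bar>cov M (\<epsilon> i) (\<lambda>x. h (t * (\<Sum>k\<in>V. \<epsilon> k x)))\<bar>
      \<le> (\<Sum>a<n. Bh' * \<bar>t\<bar> * Q * (\<Sum>k\<in>V. \<bar>B i a\<bar> * \<bar>B k a\<bar>))"
    unfolding cov_eps_h_eq[OF borel_measurable_of_deriv[OF h_deriv] h_bound i V] coef_def[symmetric]
    by (intro abs_sum_le_sum) simp
  also have "\<dots> = Bh' * \<bar>t\<bar> * Q * (\<Sum>k\<in>V. overlap i k)"
    unfolding overlap_def sum_distrib_left by (rule sum.swap)
  finally show ?thesis .
qed

lemma abs_expectation_eps_eps_decay:
  assumes "i < n" "j < n"
  shows "\<bar>expectation (\<lambda>x. \<epsilon> i x * \<epsilon> j x)\<bar> \<le> Q * (2 / (1 - \<tau>) ^ 2) * epow (sqrt \<tau>) (d i j)"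
  using abs_expectation_eps_eps_le[OF assms] mult_left_mono[OF overlap_le[OF assms], of Q] Q_ge_1
  by (simp add: mult.assoc)

lemma abs_expectation_eps_eps_sq_decay:
  assumes "i < n" "j < n"
  shows "\<bar>expectation (\<lambda>x. \<epsilon> i x * \<epsilon> j x ^ 2)\<bar>
    \<le> Q / (1 - \<tau>) * (2 / (1 - \<tau>) ^ 2) * epow (sqrt \<tau>) (d i j)"
proof -
  have "0 \<le> Q / (1 - \<tau>)"
    using Q_ge_1 tau_less_1 by simp
  with overlap_le[OF assms]
  have "Q / (1 - \<tau>) * overlap i j \<le> Q / (1 - \<tau>) * (2 / (1 - \<tau>) ^ 2 * epow (sqrt \<tau>) (d i j))"
    by (rule mult_left_mono)
  then show ?thesis
    using order_trans[OF abs_expectation_eps_eps_sq_le[OF assms]] by (simp only: mult.assoc)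
qed

lemma abs_cov_eps2_eps2_decay:
  assumes "i < n" "j < n" "k < n" "l < n"
  shows "\<bar>cov M (\<lambda>x. \<epsilon> i x * \<epsilon> j x) (\<lambda>x. \<epsilon> k x * \<epsilon> l x)\<bar>
    \<le> 2 * R * (2 / (1 - \<tau>) ^ 2) ^ 2 * epow (sqrt \<tau>) (setdist d {i, j} {k, l})"
proof -
  let ?G = "2 / (1 - \<tau>) ^ 2" and ?e = "epow (sqrt \<tau>) (setdist d {i, j} {k, l})"
  have G_e: "0 \<le> ?G * ?e"
    using epow_nonneg[OF sqrt_tau_bounds(1)] by simp
  have ik: "overlap i k \<le> ?G * ?e" and il: "overlap i l \<le> ?G * ?e"
    by (rule overlap_le_setdist; use assms in auto)+
  have jl: "overlap j l \<le> ?G" and jk: "overlap j k \<le> ?G"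
    using assms by (simp_all add: overlap_le_const)
  have "overlap i k * overlap j l \<le> (?G * ?e) * ?G" "overlap i l * overlap j k \<le> (?G * ?e) * ?G"
    by (rule mult_mono[OF ik jl G_e overlap_nonneg], rule mult_mono[OF il jk G_e overlap_nonneg])
  then have "R * (overlap i k * overlap j l + overlap i l * overlap j k) \<le> R * (2 * (?G * ?e * ?G))"
    using R_nonneg by (intro mult_left_mono) simp_all
  with abs_cov_eps2_eps2_le[OF assms] show ?thesis
    by (simp add: power2_eq_square mult_ac)
qed

lemma abs_cov_eps_h_decay:
  fixes h h' :: "real \<Rightarrow> real"
  assumes h_bound: "\<And>x. \<bar>h x\<bar> \<le> Bh" and h_deriv: "\<And>x. (h has_real_derivative h' x) (at x)"
    and h'_bound: "\<And>x. \<bar>h' x\<bar> \<le> Bh'" and i: "i < n" and V: "V \<subseteq> {..<n}"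
  shows "\<bar>cov M (\<epsilon> i) (\<lambda>x. h (t * (\<Sum>k\<in>V. \<epsilon> k x)))\<bar>
    \<le> Bh' * Q * (2 / (1 - \<tau>) ^ 2) * (1 + \<bar>t\<bar> * real (card V)) * epow (sqrt \<tau>) (setdist d {i} V)"
proof -
  let ?G = "2 / (1 - \<tau>) ^ 2" and ?e = "epow (sqrt \<tau>) (setdist d {i} V)"
  have Bh': "0 \<le> Bh'"
    using h'_bound[of 0] by (rule order_trans[OF abs_ge_zero])
  have nonneg: "0 \<le> Bh' * \<bar>t\<bar> * Q" "0 \<le> ?G * ?e"
    using Bh' Q_ge_1 epow_nonneg[OF sqrt_tau_bounds(1)] by simp_all
  have "(\<Sum>k\<in>V. overlap i k) \<le> (\<Sum>k\<in>V. ?G * ?e)"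
    using i V by (intro sum_mono overlap_le_setdist) auto
  then have "Bh' * \<bar>t\<bar> * Q * (\<Sum>k\<in>V. overlap i k) \<le> Bh' * \<bar>t\<bar> * Q * (real (card V) * (?G * ?e))"
    using nonneg by (intro mult_left_mono) simp_all
  also have "\<dots> \<le> Bh' * Q * ?G * ?e + Bh' * \<bar>t\<bar> * Q * (real (card V) * (?G * ?e))"
  proof -
    have "0 \<le> Bh' * Q * ?G * ?e"
      using Bh' Q_ge_1 epow_nonneg[OF sqrt_tau_bounds(1)] by (intro mult_nonneg_nonneg) simp_all
    then show ?thesis
      by linarith
  qed
  also have "\<dots> = Bh' * Q * ?G * (1 + \<bar>t\<bar> * real (card V)) * ?e"
    by (simp add: algebra_simps add_divide_distrib)
  finally show ?thesis
    using abs_cov_eps_h_le[OF assms, where t = t] by linarith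
qed

lemma
  shows Q_G_le_nar_const: "Q * (2 / (1 - \<tau>) ^ 2) \<le> nar_const K \<tau> Bh'"
    and Q_G_div_le_nar_const: "Q / (1 - \<tau>) * (2 / (1 - \<tau>) ^ 2) \<le> nar_const K \<tau> Bh'"
    and R_G_le_nar_const: "2 * R * (2 / (1 - \<tau>) ^ 2)\<^sup>2 \<le> nar_const K \<tau> Bh'"
    and Bh'_Q_G_le_nar_const: "\<bar>Bh'\<bar> * Q * (2 / (1 - \<tau>) ^ 2) \<le> nar_const K \<tau> Bh'"
proof -
  let ?G = "2 / (1 - \<tau>) ^ 2"
  have "0 \<le> Q * ?G" "0 \<le> Q / (1 - \<tau>) * ?G" "0 \<le> 2 * R * ?G\<^sup>2" "0 \<le> \<bar>Bh'\<bar> * Q * ?G"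
    using Q_ge_1 R_nonneg tau_less_1 by simp_all
  moreover have "nar_const K \<tau> Bh' = Q * ?G + Q / (1 - \<tau>) * ?G + 2 * R * ?G\<^sup>2 + \<bar>Bh'\<bar> * Q * ?G"
    by (simp add: nar_const_def Q_def R_def Let_def)
  ultimately show "Q * ?G \<le> nar_const K \<tau> Bh'" "Q / (1 - \<tau>) * ?G \<le> nar_const K \<tau> Bh'"
    "2 * R * ?G\<^sup>2 \<le> nar_const K \<tau> Bh'" "\<bar>Bh'\<bar> * Q * ?G \<le> nar_const K \<tau> Bh'"
    by linarith+
qed

lemma assumption2_holds: "assumption2 M n d \<epsilon> (sqrt \<tau>) (nar_const K \<tau> Bh') Bh Bh'"
  unfolding assumption2_def
proof (intro conjI allI impI ballI)
  let ?c = "nar_const K \<tau> Bh'"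
  have scale: "X * epow (sqrt \<tau>) e \<le> ?c * epow (sqrt \<tau>) e" if "X \<le> ?c" for X e
    using that epow_nonneg[OF sqrt_tau_bounds(1)] by (rule mult_right_mono)
  fix i j l :: nat assume i: "i < n" and j: "j < n" and l: "l \<in> {1, 2}"
  then consider "l = 1" | "l = 2"
    by blast
  then show "\<bar>expectation (\<lambda>x. \<epsilon> i x * \<epsilon> j x ^ l)\<bar> \<le> ?c * epow (sqrt \<tau>) (d i j)"
  proof cases
    case 1
    then show ?thesis
      using order_trans[OF abs_expectation_eps_eps_decay[OF i j] scale[OF Q_G_le_nar_const]] by simp
  next
    case 2
    then show ?thesis
      using order_trans[OF abs_expectation_eps_eps_sq_decay[OF i j] scale[OF Q_G_div_le_nar_const]]
      by simp
  qed
next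
  fix i j k l assume "i < n" "j < n" "k < n" "l < n"
  then show "\<bar>cov M (\<lambda>x. \<epsilon> i x * \<epsilon> j x) (\<lambda>x. \<epsilon> k x * \<epsilon> l x)\<bar>
      \<le> nar_const K \<tau> Bh' * epow (sqrt \<tau>) (setdist d {i, j} {k, l})"
    using R_G_le_nar_const epow_nonneg[OF sqrt_tau_bounds(1)]
    by (intro order_trans[OF abs_cov_eps2_eps2_decay] mult_right_mono)
next
  fix h :: "real \<Rightarrow> real" and h' t i V
  assume "\<forall>x. \<bar>h x\<bar> \<le> Bh" "\<forall>x. (h has_real_derivative h' x) (at x)" "\<forall>x. \<bar>h' x\<bar> \<le> Bh'"
    and i: "i < n" and V: "V \<subseteq> {..<n}"
  then have "\<bar>cov M (\<epsilon> i) (\<lambda>x. h (t * (\<Sum>k\<in>V. \<epsilon> k x)))\<bar>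
      \<le> Bh' * Q * (2 / (1 - \<tau>) ^ 2) * ((1 + \<bar>t\<bar> * real (card V)) * epow (sqrt \<tau>) (setdist d {i} V))"
    unfolding mult.assoc[symmetric] by (intro abs_cov_eps_h_decay) auto
  also have "\<dots> \<le> nar_const K \<tau> Bh' * ((1 + \<bar>t\<bar> * real (card V)) * epow (sqrt \<tau>) (setdist d {i} V))"
  proof (rule mult_right_mono)
    have "Bh' * Q * (2 / (1 - \<tau>) ^ 2) \<le> \<bar>Bh'\<bar> * Q * (2 / (1 - \<tau>) ^ 2)"
      using Q_ge_1 by (intro mult_right_mono) auto
    then show "Bh' * Q * (2 / (1 - \<tau>) ^ 2) \<le> nar_const K \<tau> Bh'"
      using Bh'_Q_G_le_nar_const[of Bh'] by (rule order_trans)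
  qed (use epow_nonneg[OF sqrt_tau_bounds(1)] in simp)
  finally show "\<bar>cov M (\<epsilon> i) (\<lambda>x. h (t * (\<Sum>k\<in>V. \<epsilon> k x)))\<bar>
      \<le> nar_const K \<tau> Bh' * (1 + \<bar>t\<bar> * real (card V)) * epow (sqrt \<tau>) (setdist d {i} V)"
    by (simp only: mult.assoc)
qed

end

lemma nar_const_pos:
  assumes "\<tau> < 1"
  shows "0 < nar_const K \<tau> Bh'"
proof -
  have Q: "0 < 1 + K ^ 4"
    by (simp add: add_pos_nonneg)
  moreover have G: "0 < 2 / (1 - \<tau>) ^ 2"
    using assms by simp
  ultimately have "0 < (1 + K ^ 4) * (2 / (1 - \<tau>) ^ 2)"
    by simp
  moreover have "0 \<le> (1 + K ^ 4) / (1 - \<tau>) * (2 / (1 - \<tau>) ^ 2)"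
    "0 \<le> 2 * ((1 + K ^ 4) + (1 + K ^ 4)\<^sup>2) * (2 / (1 - \<tau>) ^ 2)\<^sup>2"
    "0 \<le> \<bar>Bh'\<bar> * (1 + K ^ 4) * (2 / (1 - \<tau>) ^ 2)"
    using Q G assms by simp_all
  ultimately show ?thesis
    unfolding nar_const_def Let_def by linarith
qed

theorem proposition1:
  fixes K \<tau> Bh Bh' :: real
  assumes "\<tau> < 1"
  shows "\<exists>c>0. \<forall>n (A :: nat \<Rightarrow> nat \<Rightarrow> bool) (W :: nat \<Rightarrow> nat \<Rightarrow> real) (M :: 'a measure)
            (U :: nat \<Rightarrow> 'a \<Rightarrow> real) (\<epsilon> :: nat \<Rightarrow> 'a \<Rightarrow> real).
     1 \<le> n \<longrightarrow>
     (\<forall>i<n. \<forall>j<n. A i j = A j i) \<longrightarrow>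
     Max ((\<lambda>i. \<Sum>j<n. \<bar>W i j\<bar>) ` {..<n}) = \<tau> \<longrightarrow>
     (\<forall>i<n. \<forall>j<n. \<not> A i j \<longrightarrow> W i j = 0) \<longrightarrow>
     prob_space M \<longrightarrow>
     prob_space.indep_vars M (\<lambda>_. borel) U {..<n} \<longrightarrow>
     (\<forall>i<n. integrable M (\<lambda>x. U i x ^ 4) \<and> prob_space.expectation M (U i) = 0 \<and>
            (prob_space.expectation M (\<lambda>x. \<bar>U i x\<bar> ^ 4)) powr (1/4) \<le> K) \<longrightarrow>
     (\<forall>x\<in>space M. \<forall>i<n. \<epsilon> i x = (\<Sum>j<n. W i j * \<epsilon> j x) + U i x) \<longrightarrow>
     assumption2 M n (gdist A n) \<epsilon> (sqrt \<tau>) c Bh Bh'"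
proof (intro exI[of _ "nar_const K \<tau> Bh'"] conjI nar_const_pos[OF assms] allI impI)
  fix n :: nat and A :: "nat \<Rightarrow> nat \<Rightarrow> bool" and W :: "nat \<Rightarrow> nat \<Rightarrow> real"
    and M :: "'a measure" and U \<epsilon> :: "nat \<Rightarrow> 'a \<Rightarrow> real"
  assume n: "1 \<le> n" and A_sym: "\<forall>i<n. \<forall>j<n. A i j = A j i"
    and tau: "Max ((\<lambda>i. \<Sum>j<n. \<bar>W i j\<bar>) ` {..<n}) = \<tau>"
    and W_off_graph: "\<forall>i<n. \<forall>j<n. \<not> A i j \<longrightarrow> W i j = 0"
    and M: "prob_space M" and U_indep: "prob_space.indep_vars M (\<lambda>_. borel) U {..<n}"
    and U_moments: "\<forall>i<n. integrable M (\<lambda>x. U i x ^ 4) \<and> prob_space.expectation M (U i) = 0 \<and>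
      (prob_space.expectation M (\<lambda>x. \<bar>U i x\<bar> ^ 4)) powr (1/4) \<le> K"
    and eps_eq: "\<forall>x\<in>space M. \<forall>i<n. \<epsilon> i x = (\<Sum>j<n. W i j * \<epsilon> j x) + U i x"
  have row_sum_le: "(\<Sum>j<n. \<bar>W i j\<bar>) \<le> \<tau>" if "i < n" for i
    unfolding tau[symmetric] using that by (intro Max_ge) auto
  from n have "(\<Sum>j<n. \<bar>W 0 j\<bar>) \<le> \<tau>"
    by (intro row_sum_le) simp
  moreover have "0 \<le> (\<Sum>j<n. \<bar>W 0 j\<bar>)"
    by (rule sum_nonneg) simp
  ultimately have "0 \<le> \<tau>"
    by linarith
  then interpret nar_model M n U K A W \<tau> \<epsilon>
    using M U_indep U_moments eps_eq assms row_sum_le W_off_graph A_sym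
    by (intro nar_model.intro centered_indep_noise.intro nar_weights.intro nar_model_axioms.intro
        centered_indep_noise_axioms.intro) auto
  show "assumption2 M n (gdist A n) \<epsilon> (sqrt \<tau>) (nar_const K \<tau> Bh') Bh Bh'"
    by (rule assumption2_holds)
qed

end
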